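(* Let $\mathbf{k}$ be a reproducing kernel with RKHS $\mathcal{H}_{\mathbf{k}}$, let $\mathcal{X}_{\mathrm{in}}$ be a finite input set and $\mathcal{X}_{\mathrm{out}}\subseteq\mathcal{X}_{\mathrm{in}}$ a random output, let $\mathcal{F}\subset\mathcal{H}_{\mathbf{k}}$, $\varepsilon\ge0$, and $\delta'\in(0,1)$. Let $a:=\sup_{f\in\mathcal{F}}\|f\|_{\mathbf{k}}$, $\mathbb{B}_{\mathcal{F}}:=\{f\in\mathcal{H}_{\mathbf{k}}:\|f\|_{\mathbf{k}}\le a\}$, and let $\mathcal{C}_{\varepsilon,\mathcal{F}}$ be a set of minimum cardinality satisfying $\mathcal{C}_{\varepsilon,\mathcal{F}}\subset\mathbb{B}_{\mathcal{F}}$ and $\sup_{f\in\mathcal{F}}\min_{f'\in\mathcal{C}_{\varepsilon,\mathcal{F}}}\max_{x\in\mathcal{X}_{\mathrm{in}}}|f(x)-f'(x)|\le\varepsilon$. If $(\mathbb{P}_{\mathrm{in}}-\mathbb{P}_{\mathrm{out}})\mathbf{k}$ is $(\mathbf{k},\nu)$-sub-Gaussian on an event $\mathcal{E}$, then $$\mathbb{P}\Big(\mathcal{E}\cap\Big\{\sup_{f\in\mathcal{F}}(\mathbb{P}_{\mathrm{in}}-\mathbb{P}_{\mathrm{out}})f>2\varepsilon+\nu a\sqrt{2\log(|\mathcal{C}_{\varepsilon,\mathcal{F}}|/\delta')}\Big\}\Big)\le\delta',$$ i.e. on $\mathcal{E}$, $\sup_{f\in\mathcal{F}}(\mathbb{P}_{\mathrm{in}}-\mathbb{P}_{\mathrm{out}})f\le2\varepsilon+\nu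 a\sqrt{2\log(|\mathcal{C}_{\varepsilon,\mathcal{F}}|/\delta')}$ with probability at least $1-\delta'$.
   Context: $\mathbb{P}_{\mathrm{in}},\mathbb{P}_{\mathrm{out}}$ are the empirical distributions of $\mathcal{X}_{\mathrm{in}},\mathcal{X}_{\mathrm{out}}$; $(\mathbb{P}_{\mathrm{in}}-\mathbb{P}_{\mathrm{out}})f:=\mathbb{E}_{\mathbb{P}_{\mathrm{in}}}f-\mathbb{E}_{\mathbb{P}_{\mathrm{out}}}f$ and $(\mathbb{P}_{\mathrm{in}}-\mathbb{P}_{\mathrm{out}})\mathbf{k}:=\frac{1}{|\mathcal{X}_{\mathrm{in}}|}\sum_{x\in\mathcal{X}_{\mathrm{in}}}\mathbf{k}(x,\cdot)-\frac1{|\mathcal{X}_{\mathrm{out}}|}\sum_{x\in\mathcal{X}_{\mathrm{out}}}\mathbf{k}(x,\cdot)$. A random $\phi\in\mathcal{H}_{\mathbf{k}}$ is $(\mathbf{k},\nu)$-sub-Gaussian on $\mathcal{E}$ if $\nu>0$ and $\mathbb{E}[\exp(\langle f,\phi\rangle_{\mathbf{k}})\mathbf{1}_{\mathcal{E}}]\le\exp(\frac{\nu^2}{2}\|f\|_{\mathbf{k}}^2)$ for all $f\in\mathcal{H}_{\mathbf{k}}$. *)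

theory Defs
  imports "HOL-Analysis.Analysis" "HOL-Probability.Probability"
begin

text \<open>RKHS model: the RKHS H_k is a real Hilbert space (type 'h) together with
  the canonical feature map Phi x = k(x, .) in H_k.  An element f of H_k is the function
  x |-> f(x) = <f, Phi x> (reproducing property); the kernel is k x y = <Phi x, Phi y>.
  The condition below says that distinct elements of 'h are distinct functions,
  i.e. 'h really is (isometric to) a Hilbert space of functions with reproducing kernel k.\<close>

definition rkhs_feature :: "('a \<Rightarrow> 'h::{real_inner,complete_space}) \<Rightarrow> bool" where
  "rkhs_feature Phi \<longleftrightarrow> inj (\<lambda>f::'h. \<lambda>x. inner f (Phi x))"

definition kernel_of :: "('a \<Rightarrow> 'h::real_inner) \<Rightarrow> 'a \<Rightarrow> 'a \<Rightarrow> real" where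
  "kernel_of Phi x y = inner (Phi x) (Phi y)"

definition rk_eval :: "('a \<Rightarrow> 'h::real_inner) \<Rightarrow> 'h \<Rightarrow> 'a \<Rightarrow> real" where
  "rk_eval Phi f x = inner f (Phi x)"

definition emp_diff_fun :: "('a \<Rightarrow> 'h::real_inner) \<Rightarrow> 'a set \<Rightarrow> 'a set \<Rightarrow> 'h \<Rightarrow> real" where
  "emp_diff_fun Phi Xin Xout f =
     (\<Sum>x\<in>Xin. rk_eval Phi f x) / real (card Xin) - (\<Sum>x\<in>Xout. rk_eval Phi f x) / real (card Xout)"

definition emp_diff_kernel :: "('a \<Rightarrow> 'h::real_inner) \<Rightarrow> 'a set \<Rightarrow> 'a set \<Rightarrow> 'h" where
  "emp_diff_kernel Phi Xin Xout =
     (1 / real (card Xin)) *\<^sub>R (\<Sum>x\<in>Xin. Phi x) - (1 / real (card Xout)) *\<^sub>R (\<Sum>x\<in>Xout. Phi x)"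

definition subgaussian_on ::
  "'w measure \<Rightarrow> 'w set \<Rightarrow> real \<Rightarrow> ('w \<Rightarrow> 'h::real_inner) \<Rightarrow> bool" where
  "subgaussian_on M E nu phi \<longleftrightarrow> nu > 0 \<and>
     (\<forall>f::'h. (\<integral>\<^sup>+ \<omega>. ennreal (exp (inner f (phi \<omega>)) * indicator E \<omega>) \<partial>M)
                 \<le> ennreal (exp (nu\<^sup>2 / 2 * (norm f)\<^sup>2)))"

definition is_cover :: "('a \<Rightarrow> 'h::real_inner) \<Rightarrow> 'a set \<Rightarrow> 'h set \<Rightarrow> real \<Rightarrow> real \<Rightarrow> 'h set \<Rightarrow> bool" where
  "is_cover Phi Xin F a eps C \<longleftrightarrow>
     C \<subseteq> {g. norm g \<le> a} \<and>
     (\<forall>f\<in>F. \<exists>f'\<in>C. \<forall>x\<in>Xin. \<bar>rk_eval Phi f x - rk_eval Phi f' x\<bar> \<le> eps)"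

end

theory Submission
  imports Defs
begin

text \<open>For a fixed element c of the cover, (P_in - P_out) c = <c, (P_in - P_out) k> is a
  sub-Gaussian scalar on E, so a Chernoff bound makes its tail above
  \<open>\<nu> a sqrt (2 log (|C| / \<delta>'))\<close> at most \<open>\<delta>' / |C|\<close>; a union bound over the finite cover C
  controls all of them at once. Every f in F is uniformly within \<open>\<epsilon>\<close> of some c in C on Xin,
  hence on Xout, so (P_in - P_out) f exceeds (P_in - P_out) c by at most \<open>2 \<epsilon>\<close>.\<close>

lemma abs_average_diff_le:
  fixes g h :: "'a \<Rightarrow> real"
  assumes "finite S" "S \<noteq> {}" "\<And>x. x \<in> S \<Longrightarrow> \<bar>g x - h x\<bar> \<le> e"
  shows "\<bar>sum g S / real (card S) - sum h S / real (card S)\<bar> \<le> e"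
proof -
  have card_pos: "real (card S) > 0" using assms(1,2) by (simp add: card_gt_0_iff)
  have "\<bar>sum g S - sum h S\<bar> \<le> (\<Sum>x\<in>S. \<bar>g x - h x\<bar>)"
    by (metis sum_abs sum_subtractf)
  also have "\<dots> \<le> e * real (card S)"
    using sum_mono[of S "\<lambda>x. \<bar>g x - h x\<bar>" "\<lambda>_. e"] assms(3) by (simp add: mult.commute)
  finally have "\<bar>sum g S - sum h S\<bar> / real (card S) \<le> e"
    using card_pos by (simp add: pos_divide_le_eq)
  then show ?thesis
    using card_pos by (simp only: diff_divide_distrib[symmetric] abs_divide abs_of_pos)
qed

lemma emp_diff_fun_eq_inner:
  "emp_diff_fun Phi Xin Xout f = inner f (emp_diff_kernel Phi Xin Xout)"
  unfolding emp_diff_fun_def emp_diff_kernel_def rk_eval_def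
  by (simp add: inner_diff_right inner_sum_right)

lemma emp_diff_fun_le_of_close:
  assumes "finite Xin" "Xin \<noteq> {}" "Xout \<subseteq> Xin" "Xout \<noteq> {}"
    and "\<And>x. x \<in> Xin \<Longrightarrow> \<bar>rk_eval Phi f x - rk_eval Phi g x\<bar> \<le> eps"
  shows "emp_diff_fun Phi Xin Xout f \<le> 2 * eps + emp_diff_fun Phi Xin Xout g"
proof -
  have "finite Xout" using assms(1,3) finite_subset by blast
  then have "\<bar>sum (rk_eval Phi f) Xout / real (card Xout)
      - sum (rk_eval Phi g) Xout / real (card Xout)\<bar> \<le> eps"
    using assms(3-5) by (intro abs_average_diff_le) auto
  moreover have "\<bar>sum (rk_eval Phi f) Xin / real (card Xin)
      - sum (rk_eval Phi g) Xin / real (card Xin)\<bar> \<le> eps"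
    using assms(1,2,5) by (intro abs_average_diff_le) auto
  ultimately show ?thesis
    unfolding emp_diff_fun_def by (simp add: abs_le_iff)
qed

lemma bdd_above_emp_diff_fun:
  assumes "bdd_above (norm ` F)"
  shows "bdd_above (emp_diff_fun Phi Xin Xout ` F)"
proof -
  obtain b where b: "\<And>f. f \<in> F \<Longrightarrow> norm f \<le> b" using assms by (auto simp: bdd_above_def)
  have "emp_diff_fun Phi Xin Xout f \<le> b * norm (emp_diff_kernel Phi Xin Xout)" if "f \<in> F" for f
  proof -
    have "emp_diff_fun Phi Xin Xout f \<le> norm f * norm (emp_diff_kernel Phi Xin Xout)"
      unfolding emp_diff_fun_eq_inner by (metis Cauchy_Schwarz_ineq2 abs_le_D1)
    also have "\<dots> \<le> b * norm (emp_diff_kernel Phi Xin Xout)"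
      using b[OF that] by (intro mult_right_mono) auto
    finally show ?thesis .
  qed
  then show ?thesis by (intro bdd_aboveI2)
qed

lemma sup_emp_diff_fun_gt_imp_cover_gt:
  assumes "finite Xin" "Xin \<noteq> {}" "Xout \<subseteq> Xin" "Xout \<noteq> {}"
    and "F \<noteq> {}" "bdd_above (norm ` F)" "is_cover Phi Xin F a eps C"
    and "(SUP f\<in>F. emp_diff_fun Phi Xin Xout f) > 2 * eps + t"
  shows "\<exists>c\<in>C. inner c (emp_diff_kernel Phi Xin Xout) > t"
proof -
  obtain f where f: "f \<in> F" "emp_diff_fun Phi Xin Xout f > 2 * eps + t"
    using assms(8) less_cSUP_iff[OF assms(5) bdd_above_emp_diff_fun[OF assms(6), of Phi Xin Xout]]
    by blast
  obtain c where c: "c \<in> C" "\<And>x. x \<in> Xin \<Longrightarrow> \<bar>rk_eval Phi f x - rk_eval Phi c x\<bar> \<le> eps"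
    using assms(7) f(1) unfolding is_cover_def by blast
  have "emp_diff_fun Phi Xin Xout f \<le> 2 * eps + emp_diff_fun Phi Xin Xout c"
    using assms(1-4) c(2) by (rule emp_diff_fun_le_of_close)
  then have "inner c (emp_diff_kernel Phi Xin Xout) > t"
    using f(2) unfolding emp_diff_fun_eq_inner by linarith
  then show ?thesis using c(1) by blast
qed

lemma measurable_comp_finite_subset_valued:
  assumes "finite X" "\<And>\<omega>. \<omega> \<in> space M \<Longrightarrow> Xout \<omega> \<subseteq> X"
    and "\<And>S. {\<omega> \<in> space M. Xout \<omega> = S} \<in> sets M"
  shows "(\<lambda>\<omega>. g (Xout \<omega>)) \<in> borel_measurable M"
proof -
  have "Xout -` {S} \<inter> space M = {\<omega> \<in> space M. Xout \<omega> = S}" for S by auto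
  then have "Xout \<in> M \<rightarrow>\<^sub>M count_space (Pow X)"
    using assms by (auto simp: measurable_count_space_eq2)
  then show ?thesis
    by (rule measurable_compose) simp
qed

lemma (in prob_space) prob_UN_le_card_mult:
  assumes "finite I" "\<And>i. i \<in> I \<Longrightarrow> A i \<in> events" "\<And>i. i \<in> I \<Longrightarrow> prob (A i) \<le> p"
  shows "prob (\<Union>i\<in>I. A i) \<le> real (card I) * p"
proof -
  have "prob (\<Union>i\<in>I. A i) \<le> (\<Sum>i\<in>I. prob (A i))"
    using assms(1,2) by (intro finite_measure_subadditive_finite) auto
  also have "\<dots> \<le> real (card I) * p"
    using sum_mono[of I _ "\<lambda>_. p", OF assms(3)] by simp
  finally show ?thesis .
qed

lemma (in prob_space) subgaussian_on_chernoff: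
  assumes "subgaussian_on M E nu phi" "E \<in> sets M"
    and "(\<lambda>\<omega>. inner c (phi \<omega>)) \<in> borel_measurable M" "lam \<ge> 0"
  shows "exp (lam * t) * prob {\<omega> \<in> space M. \<omega> \<in> E \<and> t < inner c (phi \<omega>)}
           \<le> exp (nu\<^sup>2 / 2 * (lam * norm c)\<^sup>2)"
proof -
  let ?A = "{\<omega> \<in> space M. \<omega> \<in> E \<and> t < inner c (phi \<omega>)}"
  have A: "?A \<in> events" using assms(2,3) by measurable
  have "ennreal (exp (lam * t)) * emeasure M ?A = (\<integral>\<^sup>+ \<omega>. ennreal (exp (lam * t)) * indicator ?A \<omega> \<partial>M)"
    using A by (simp add: nn_integral_cmult_indicator)
  also have "\<dots> \<le> (\<integral>\<^sup>+ \<omega>. ennreal (exp (inner (lam *\<^sub>R c) (phi \<omega>)) * indicator E \<omega>) \<partial>M)"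
  proof (intro nn_integral_mono)
    fix \<omega> assume "\<omega> \<in> space M"
    have "exp (lam * t) \<le> exp (inner (lam *\<^sub>R c) (phi \<omega>))" if "t < inner c (phi \<omega>)"
      using that assms(4) by (simp add: mult_left_mono)
    then show "ennreal (exp (lam * t)) * indicator ?A \<omega>
        \<le> ennreal (exp (inner (lam *\<^sub>R c) (phi \<omega>)) * indicator E \<omega>)"
      by (auto simp: indicator_def)
  qed
  also have "\<dots> \<le> ennreal (exp (nu\<^sup>2 / 2 * (norm (lam *\<^sub>R c))\<^sup>2))"
    using assms(1) unfolding subgaussian_on_def by blast
  finally have "ennreal (exp (lam * t) * prob ?A) \<le> ennreal (exp (nu\<^sup>2 / 2 * (lam * norm c)\<^sup>2))"
    using assms(4) by (simp add: emeasure_eq_measure ennreal_mult)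
  then show ?thesis by (simp add: ennreal_le_iff)
qed

lemma (in prob_space) subgaussian_on_tail_bound:
  assumes "subgaussian_on M E nu phi" "E \<in> sets M"
    and "(\<lambda>\<omega>. inner c (phi \<omega>)) \<in> borel_measurable M"
    and "norm c \<le> a" "L \<ge> 0"
  shows "prob {\<omega> \<in> space M. \<omega> \<in> E \<and> nu * a * sqrt (2 * L) < inner c (phi \<omega>)} \<le> exp (- L)"
proof (cases "a = 0")
  case True
  with assms(4) have "c = 0" by simp
  with True show ?thesis by simp
next
  case False
  then have a: "a > 0" using assms(4) norm_ge_zero[of c] by linarith
  have nu: "nu > 0" using assms(1) unfolding subgaussian_on_def by blast
  define lam where "lam = sqrt (2 * L) / (nu * a)"
  have lam: "lam \<ge> 0" unfolding lam_def using a nu assms(5) by (intro divide_nonneg_pos) auto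
  let ?P = "prob {\<omega> \<in> space M. \<omega> \<in> E \<and> nu * a * sqrt (2 * L) < inner c (phi \<omega>)}"
  have "lam * (nu * a * sqrt (2 * L)) = 2 * L"
    unfolding lam_def using a nu assms(5) by simp
  then have "exp (2 * L) * ?P \<le> exp (nu\<^sup>2 / 2 * (lam * norm c)\<^sup>2)"
    using subgaussian_on_chernoff[OF assms(1-3) lam, of "nu * a * sqrt (2 * L)"] by simp
  also have "\<dots> \<le> exp (nu\<^sup>2 / 2 * (lam * a)\<^sup>2)"
    using assms(4) lam by (intro exp_mono mult_left_mono power_mono) auto
  also have "\<dots> = exp L"
    unfolding lam_def using a nu assms(5) by (simp add: power_divide power_mult_distrib)
  finally have "?P * exp (2 * L) \<le> exp L"
    by (simp only: mult.commute)
  then have "?P \<le> exp L / exp (2 * L)"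
    by (simp only: pos_le_divide_eq exp_gt_zero)
  also have "\<dots> = exp (- L)"
    by (simp flip: exp_diff)
  finally show ?thesis .
qed

theorem lemmaC3:
  fixes M :: "'w measure"
    and Phi :: "'a \<Rightarrow> 'h::{real_inner,complete_space}"
    and Xin :: "'a set" and Xout :: "'w \<Rightarrow> 'a set"
    and F :: "'h set" and C :: "'h set"
    and E :: "'w set" and eps nu delta a :: real
  assumes "prob_space M"
    and "rkhs_feature Phi"
    and "finite Xin" and "Xin \<noteq> {}"
    and "\<And>\<omega>. \<omega> \<in> space M \<Longrightarrow> Xout \<omega> \<subseteq> Xin \<and> Xout \<omega> \<noteq> {}"
    and "\<And>S. {\<omega> \<in> space M. Xout \<omega> = S} \<in> sets M"
    and "F \<noteq> {}" and "bdd_above (norm ` F)"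
    and "eps \<ge> 0" and "0 < delta" and "delta < 1"
    and "a = (SUP f\<in>F. norm f)"
    and "finite C" and "is_cover Phi Xin F a eps C"
    and "\<And>C'. finite C' \<Longrightarrow> is_cover Phi Xin F a eps C' \<Longrightarrow> card C \<le> card C'"
    and "E \<in> sets M"
    and "subgaussian_on M E nu (\<lambda>\<omega>. emp_diff_kernel Phi Xin (Xout \<omega>))"
  shows "measure M {\<omega> \<in> space M. \<omega> \<in> E \<and>
            (SUP f\<in>F. emp_diff_fun Phi Xin (Xout \<omega>) f)
              > 2 * eps + nu * a * sqrt (2 * ln (real (card C) / delta))} \<le> delta"
proof -
  interpret prob_space M by fact
  define L where "L = ln (real (card C) / delta)"
  define tail where "tail = (\<lambda>c. {\<omega> \<in> space M. \<omega> \<in> E \<and>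
    nu * a * sqrt (2 * L) < inner c (emp_diff_kernel Phi Xin (Xout \<omega>))})"
  have "C \<noteq> {}" using assms(7,14) unfolding is_cover_def by blast
  then have card_C: "real (card C) \<ge> 1" using assms(13) by (simp add: Suc_le_eq card_gt_0_iff)
  then have L: "L \<ge> 0" and exp_L: "exp (- L) = delta / real (card C)"
    using assms(10,11) by (simp_all add: L_def exp_minus ln_ge_zero_iff le_divide_eq)
  have measurable: "(\<lambda>\<omega>. inner c (emp_diff_kernel Phi Xin (Xout \<omega>))) \<in> borel_measurable M"
    for c using assms(3,5,6) by (intro measurable_comp_finite_subset_valued) auto
  then have tail_events: "tail c \<in> events" for c
    using assms(16) unfolding tail_def by measurable
  have tail_prob: "prob (tail c) \<le> delta / real (card C)" if "c \<in> C" for c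
    using subgaussian_on_tail_bound[OF assms(17,16) measurable _ L, of c a] assms(14) that
    by (simp add: tail_def exp_L is_cover_def subset_eq)
  have "measure M {\<omega> \<in> space M. \<omega> \<in> E \<and>
            (SUP f\<in>F. emp_diff_fun Phi Xin (Xout \<omega>) f) > 2 * eps + nu * a * sqrt (2 * L)}
      \<le> prob (\<Union>c\<in>C. tail c)"
    using assms(3-8,13,14) sup_emp_diff_fun_gt_imp_cover_gt[of Xin _ F Phi a eps C] tail_events
    by (intro finite_measure_mono sets.finite_UN) (auto simp: tail_def)
  also have "\<dots> \<le> real (card C) * (delta / real (card C))"
    using assms(13) tail_events tail_prob by (rule prob_UN_le_card_mult)
  also have "\<dots> = delta"
    using card_C by simp
  finally show ?thesis unfolding L_def .
qed

end
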